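(* Let $L_1,\ldots,L_r$ be real linear forms in $n$ variables, $L_i(\mathbf x)=\sum_{j\le n}\lambda_{i,j}x_j$, such that for every $\boldsymbol\alpha\in\mathbb{R}^r\setminus\{\mathbf0\}$ the form $\boldsymbol\alpha\cdot\mathbf L$ does not have all coefficients rational. Let $\Lambda$ be the $n\times r$ matrix with $(j,i)$ entry $\lambda_{i,j}$. For $\boldsymbol\alpha\in\mathbb{R}^r$ and $P\ge1$ let \[ \mathcal F(\boldsymbol\alpha;P)=\sup_{q\in\mathbb N,\ \mathbf a\in\mathbb{Z}^n}\ \prod_{v\le n}\big(q+P|q\lambda_v-a_v|\big)^{-1},\qquad\text{where }\boldsymbol\lambda=\Lambda\boldsymbol\alpha . \] Then for any $0<V\le W$, \[ \sup_{V\le|\Lambda\boldsymbol\alpha|\le W}\mathcal F(\boldsymbol\alpha;P)\to0\qquad(P\to\infty). \]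
   Context: $|\mathbf y|=\max_i|y_i|$ for vectors. *)

theory Defs
  imports "HOL-Analysis.Analysis"
begin

definition supnorm :: "real^'n \<Rightarrow> real" where
  "supnorm y = Max (range (\<lambda>j. \<bar>y $ j\<bar>))"

text \<open>The matrix Lambda (n x r) with (j,i) entry lambda_{i,j}, given the
  coefficient rows L$i$j = lambda_{i,j} of the forms L_1..L_r.\<close>
definition LamMat :: "real^'n^'r \<Rightarrow> real^'r^'n" where
  "LamMat L = transpose L"

definition Fcal :: "real^'n^'r \<Rightarrow> real^'r \<Rightarrow> real \<Rightarrow> real" where
  "Fcal L \<alpha> P = Sup {(\<Prod>v\<in>UNIV. inverse (real q + P * \<bar>real q * (LamMat L *v \<alpha>) $ v - of_int (a $ v)\<bar>))
                      | (q::nat) (a::int^'n). q \<ge> 1}"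

end

theory Submission
  imports Defs
begin

text \<open>The vectors \<open>\<Lambda>\<alpha>\<close> with \<open>V \<le> |\<Lambda>\<alpha>| \<le> W\<close> form a compact set \<open>K\<close>, and the irrationality
  hypothesis says that for every \<open>x \<in> K\<close> and \<open>q \<ge> 1\<close> some \<open>q x\<^sub>v\<close> is not an integer.
  For each fixed \<open>q\<close>, compactness turns this into a uniform lower bound \<open>\<delta>\<^sub>q > 0\<close> on the
  distance of some \<open>q x\<^sub>v\<close> to \<open>\<int>\<close>, so the \<open>q\<close>-terms of \<open>\<F>\<close> are at most \<open>1/(P\<delta>\<^sub>q)\<close>.
  The terms with \<open>q > Q\<close> are at most \<open>1/q < 1/Q\<close> regardless of \<open>P\<close>, and only finitely many
  \<open>q \<le> Q\<close> remain.\<close>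

lemma component_le_supnorm: "\<bar>y $ j\<bar> \<le> supnorm y"
  unfolding supnorm_def by (rule Max_ge) auto

lemma supnorm_le_iff: "supnorm y \<le> c \<longleftrightarrow> (\<forall>j. \<bar>y $ j\<bar> \<le> c)"
  unfolding supnorm_def by (subst Max_le_iff) auto

lemma le_supnorm_iff: "c \<le> supnorm y \<longleftrightarrow> (\<exists>j. c \<le> \<bar>y $ j\<bar>)"
  unfolding supnorm_def by (subst Max_ge_iff) auto

lemma supnorm_attained: "\<exists>j. supnorm y = \<bar>y $ j\<bar>"
proof -
  have "supnorm y \<in> range (\<lambda>j. \<bar>y $ j\<bar>)"
    unfolding supnorm_def by (rule Max_in) auto
  then show ?thesis by auto
qed

lemma supnorm_zero [simp]: "supnorm 0 = 0"
  using supnorm_attained[of 0] by auto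

lemma supnorm_pos: "y \<noteq> 0 \<Longrightarrow> 0 < supnorm y"
  by (metis component_le_supnorm order.strict_trans2 vec_eq_iff zero_index zero_less_abs_iff)

lemma supnorm_scaleR: "supnorm (c *\<^sub>R y) = \<bar>c\<bar> * supnorm y"
proof (rule antisym)
  show "supnorm (c *\<^sub>R y) \<le> \<bar>c\<bar> * supnorm y"
    by (auto simp: supnorm_le_iff abs_mult intro: mult_left_mono component_le_supnorm)
  obtain j where "supnorm y = \<bar>y $ j\<bar>"
    using supnorm_attained by blast
  then show "\<bar>c\<bar> * supnorm y \<le> supnorm (c *\<^sub>R y)"
    using component_le_supnorm[of "c *\<^sub>R y" j] by (simp add: abs_mult)
qed

lemma compact_Int_supnorm_shell:
  fixes S :: "(real^'n) set"
  assumes "closed S"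
  shows "compact (S \<inter> {x. V \<le> supnorm x \<and> supnorm x \<le> W})"
proof -
  have "{x. V \<le> supnorm x \<and> supnorm x \<le> W} =
        (\<Union>j. {x::real^'n. V \<le> \<bar>x $ j\<bar>}) \<inter> (\<Inter>j. {x. \<bar>x $ j\<bar> \<le> W})"
    by (auto simp: le_supnorm_iff supnorm_le_iff)
  moreover have "closed ((\<Union>j. {x::real^'n. V \<le> \<bar>x $ j\<bar>}) \<inter> (\<Inter>j. {x. \<bar>x $ j\<bar> \<le> W}))"
    by (intro closed_Int closed_Union closed_INT ballI closed_Collect_le continuous_intros) auto
  ultimately have "closed (S \<inter> {x. V \<le> supnorm x \<and> supnorm x \<le> W})"
    using assms by (simp add: closed_Int)
  moreover have "norm x \<le> real CARD('n) * W" if "supnorm x \<le> W" for x :: "real^'n"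
  proof -
    have "norm x \<le> (\<Sum>j\<in>UNIV. \<bar>x $ j\<bar>)"
      by (rule norm_le_l1_cart)
    also have "\<dots> \<le> (\<Sum>j\<in>(UNIV::'n set). W)"
      using that by (intro sum_mono) (simp add: supnorm_le_iff)
    finally show ?thesis by simp
  qed
  then have "bounded (S \<inter> {x. V \<le> supnorm x \<and> supnorm x \<le> W})"
    unfolding bounded_iff by blast
  ultimately show ?thesis
    by (simp add: compact_eq_bounded_closed)
qed

lemma prod_le_factor:
  fixes f :: "'a \<Rightarrow> 'b::linordered_idom"
  assumes "finite A" "w \<in> A" "\<And>v. v \<in> A \<Longrightarrow> 0 \<le> f v \<and> f v \<le> 1"
  shows "prod f A \<le> f w"
proof -
  have "prod f A = f w * prod f (A - {w})"
    using assms(1,2) by (simp add: prod.remove)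
  also have "\<dots> \<le> f w * 1"
    using assms by (intro mult_left_mono prod_le_1) auto
  finally show ?thesis by simp
qed

lemma of_nat_mult_notin_Ints:
  assumes "x \<notin> \<rat>" "q \<ge> 1"
  shows "real q * x \<notin> \<int>"
proof
  assume "real q * x \<in> \<int>"
  then have "real q * x \<in> \<rat>"
    using Ints_subset_Rats by blast
  then have "real q * x / real q \<in> \<rat>"
    by (intro Rats_divide) auto
  with assms show False by simp
qed

lemma tendsto_zero_SUP_uniformI:
  fixes f :: "'a \<Rightarrow> 'b \<Rightarrow> real"
  assumes "A \<noteq> {}" "\<And>e. 0 < e \<Longrightarrow> eventually (\<lambda>P. \<forall>\<alpha>\<in>A. 0 \<le> f \<alpha> P \<and> f \<alpha> P \<le> e) F"
  shows "((\<lambda>P. SUP \<alpha>\<in>A. f \<alpha> P) \<longlongrightarrow> 0) F"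
proof (rule tendstoI)
  fix e :: real
  assume "0 < e"
  have "dist (SUP \<alpha>\<in>A. f \<alpha> P) 0 < e" if bounds: "\<forall>\<alpha>\<in>A. 0 \<le> f \<alpha> P \<and> f \<alpha> P \<le> e/2" for P
  proof -
    obtain \<alpha>0 where "\<alpha>0 \<in> A"
      using assms(1) by blast
    have "bdd_above ((\<lambda>\<alpha>. f \<alpha> P) ` A)"
      using bounds by (intro bdd_aboveI[of _ "e/2"]) auto
    then have "0 \<le> (SUP \<alpha>\<in>A. f \<alpha> P)"
      using bounds \<open>\<alpha>0 \<in> A\<close> by (meson cSUP_upper order_trans)
    moreover have "(SUP \<alpha>\<in>A. f \<alpha> P) \<le> e/2"
      using bounds assms(1) by (intro cSUP_least) auto
    ultimately show ?thesis
      using \<open>0 < e\<close> by simp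
  qed
  then show "\<forall>\<^sub>F P in F. dist (SUP \<alpha>\<in>A. f \<alpha> P) 0 < e"
    using assms(2)[of "e/2"] \<open>0 < e\<close> by (auto elim: eventually_mono)
qed

lemma exists_ge_mean:
  fixes f :: "'n::finite \<Rightarrow> real"
  shows "\<exists>v. (\<Sum>w\<in>UNIV. f w) / real CARD('n) \<le> f v"
proof (rule ccontr)
  assume "\<nexists>v. (\<Sum>w\<in>UNIV. f w) / real CARD('n) \<le> f v"
  then have "(\<Sum>w\<in>UNIV. f w) < real CARD('n) * ((\<Sum>w\<in>UNIV. f w) / real CARD('n))"
    by (intro sum_bounded_above_strict) (auto simp: not_le)
  then show False
    by simp
qed

lemma compact_uniform_dist_Ints:
  fixes K :: "(real^'n) set"
  assumes "compact K" "\<And>x. x \<in> K \<Longrightarrow> \<exists>v. c * x $ v \<notin> \<int>"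
  shows "\<exists>\<delta>>0. \<forall>x\<in>K. \<exists>v. \<forall>m::int. \<delta> \<le> \<bar>c * x $ v - of_int m\<bar>"
proof (cases "K = {}")
  case True
  then show ?thesis by (auto intro: exI[of _ 1])
next
  case False
  define g where "g x = (\<Sum>v\<in>UNIV. infdist (c * x $ v) \<int>)" for x :: "real^'n"
  have "continuous_on K g"
    unfolding g_def by (intro continuous_intros)
  then obtain x0 where "x0 \<in> K" and x0_min: "\<And>x. x \<in> K \<Longrightarrow> g x0 \<le> g x"
    using continuous_attains_inf[OF assms(1) False] by blast
  have g_pos: "0 < g x" if x: "x \<in> K" for x
  proof -
    obtain v where "c * x $ v \<notin> \<int>"
      using assms(2)[OF x] by blast
    then have "infdist (c * x $ v) \<int> \<noteq> 0"
      using in_closed_iff_infdist_zero[of "\<int>::real set"] by auto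
    then have "0 < infdist (c * x $ v) \<int>"
      using infdist_nonneg[of "c * x $ v" \<int>] by linarith
    also have "\<dots> \<le> g x"
      unfolding g_def by (rule member_le_sum) (auto simp: infdist_nonneg)
    finally show ?thesis .
  qed
  define \<delta> where "\<delta> = g x0 / real CARD('n)"
  have "\<exists>v. \<forall>m::int. \<delta> \<le> \<bar>c * x $ v - of_int m\<bar>" if "x \<in> K" for x
  proof -
    obtain v where "g x / real CARD('n) \<le> infdist (c * x $ v) \<int>"
      using exists_ge_mean[of "\<lambda>v. infdist (c * x $ v) \<int>"] unfolding g_def by blast
    moreover have "\<delta> \<le> g x / real CARD('n)"
      unfolding \<delta>_def using x0_min[OF that] by (simp add: divide_right_mono)
    moreover have "infdist (c * x $ v) \<int> \<le> \<bar>c * x $ v - of_int m\<bar>" for m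
      using infdist_le[of "of_int m" \<int> "c * x $ v"] by (simp add: dist_real_def)
    ultimately show ?thesis
      by (meson order_trans)
  qed
  moreover have "\<delta> > 0"
    using g_pos[OF \<open>x0 \<in> K\<close>] by (simp add: \<delta>_def)
  ultimately show ?thesis by blast
qed

lemma LamMat_mult_component: "(LamMat L *v \<alpha>) $ j = (\<Sum>i\<in>UNIV. \<alpha> $ i * L $ i $ j)"
  unfolding LamMat_def matrix_vector_mult_def transpose_def by (simp add: mult.commute)

lemma LamMat_image_notin_Ints:
  assumes "\<And>\<alpha>::real^'r. \<alpha> \<noteq> 0 \<Longrightarrow> \<exists>j. (\<Sum>i\<in>UNIV. \<alpha> $ i * L $ i $ j) \<notin> \<rat>"
    and "x \<in> range ((*v) (LamMat L))" "x \<noteq> 0" "1 \<le> q"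
  shows "\<exists>v. real q * x $ v \<notin> \<int>"
proof -
  obtain \<alpha> where x: "x = LamMat L *v \<alpha>"
    using assms(2) by blast
  then have "\<alpha> \<noteq> 0"
    using assms(3) by auto
  then obtain v where "x $ v \<notin> \<rat>"
    using assms(1) x by (auto simp: LamMat_mult_component)
  then show ?thesis
    using of_nat_mult_notin_Ints assms(4) by blast
qed

lemma exists_supnorm_LamMat_eq:
  assumes "\<And>\<alpha>::real^'r. \<alpha> \<noteq> 0 \<Longrightarrow> \<exists>j. (\<Sum>i\<in>UNIV. \<alpha> $ i * L $ i $ j) \<notin> \<rat>" "0 \<le> t"
  shows "\<exists>\<alpha>. supnorm (LamMat L *v \<alpha>) = t"
proof -
  obtain i :: 'r where True by simp
  obtain j where "(LamMat L *v axis i 1) $ j \<notin> \<rat>"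
    using assms(1)[of "axis i 1"] by (auto simp: LamMat_mult_component axis_eq_0_iff)
  then have "LamMat L *v axis i 1 \<noteq> 0"
    by (metis Rats_0 zero_index)
  then have "0 < supnorm (LamMat L *v axis i 1)"
    by (rule supnorm_pos)
  then have "supnorm (LamMat L *v ((t / supnorm (LamMat L *v axis i 1)) *\<^sub>R axis i 1)) = t"
    using assms(2) by (simp add: matrix_vector_mult_scaleR supnorm_scaleR)
  then show ?thesis ..
qed

definition Fcal_term :: "real^'n \<Rightarrow> real \<Rightarrow> nat \<Rightarrow> int^'n \<Rightarrow> real" where
  "Fcal_term x P q a = (\<Prod>v\<in>UNIV. inverse (real q + P * \<bar>real q * x $ v - of_int (a $ v)\<bar>))"

lemma Fcal_eq_Sup_Fcal_term:
  "Fcal L \<alpha> P = Sup {Fcal_term (LamMat L *v \<alpha>) P q a | q a. q \<ge> 1}"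
  by (simp add: Fcal_def Fcal_term_def)

lemma Fcal_term_nonneg: "0 \<le> P \<Longrightarrow> 0 \<le> Fcal_term x P q a"
  unfolding Fcal_term_def by (intro prod_nonneg) simp

lemma Fcal_term_le_factor:
  assumes "0 \<le> P" "1 \<le> q"
  shows "Fcal_term x P q a \<le> inverse (real q + P * \<bar>real q * x $ w - of_int (a $ w)\<bar>)"
proof -
  have "0 \<le> inverse (real q + P * \<bar>t\<bar>) \<and> inverse (real q + P * \<bar>t\<bar>) \<le> 1" for t
  proof -
    have "1 \<le> real q + P * \<bar>t\<bar>"
      using assms by (simp add: add_increasing2)
    then show ?thesis
      by (simp add: inverse_le_1_iff)
  qed
  then show ?thesis
    unfolding Fcal_term_def by (intro prod_le_factor) auto
qed

lemma Fcal_term_le_inverse: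
  assumes "0 \<le> P" "1 \<le> q"
  shows "Fcal_term x P q a \<le> inverse (real q)"
proof -
  let ?w = "undefined :: 'n"
  have "Fcal_term x P q a \<le> inverse (real q + P * \<bar>real q * x $ ?w - of_int (a $ ?w)\<bar>)"
    by (rule Fcal_term_le_factor[OF assms])
  also have "\<dots> \<le> inverse (real q)"
    using assms by (intro le_imp_inverse_le) auto
  finally show ?thesis .
qed

lemma eventually_Fcal_term_le:
  fixes K :: "(real^'n) set"
  assumes "compact K" "\<And>x. x \<in> K \<Longrightarrow> \<exists>v. real q * x $ v \<notin> \<int>" "1 \<le> q" "0 < e"
  shows "eventually (\<lambda>P. \<forall>x\<in>K. \<forall>a. Fcal_term x P q a \<le> e) at_top"
proof -
  obtain \<delta> where "\<delta> > 0" and \<delta>: "\<And>x. x \<in> K \<Longrightarrow> \<exists>v. \<forall>m::int. \<delta> \<le> \<bar>real q * x $ v - of_int m\<bar>"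
    using compact_uniform_dist_Ints[OF assms(1,2)] by blast
  have bound: "Fcal_term x P q a \<le> e" if P: "inverse (\<delta> * e) \<le> P" and "x \<in> K" for P x a
  proof -
    obtain v where v: "\<delta> \<le> \<bar>real q * x $ v - of_int (a $ v)\<bar>"
      using \<delta>[OF \<open>x \<in> K\<close>] by blast
    have "0 < inverse (\<delta> * e)"
      using \<open>\<delta> > 0\<close> \<open>0 < e\<close> by simp
    then have "0 < P"
      using P by linarith
    have "Fcal_term x P q a \<le> inverse (real q + P * \<bar>real q * x $ v - of_int (a $ v)\<bar>)"
      using \<open>0 < P\<close> \<open>1 \<le> q\<close> by (intro Fcal_term_le_factor) auto
    also have "\<dots> \<le> inverse (P * \<delta>)"
    proof (rule le_imp_inverse_le)
      show "0 < P * \<delta>"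
        using \<open>0 < P\<close> \<open>\<delta> > 0\<close> by simp
      show "P * \<delta> \<le> real q + P * \<bar>real q * x $ v - of_int (a $ v)\<bar>"
        using mult_left_mono[OF v less_imp_le[OF \<open>0 < P\<close>]] of_nat_0_le_iff[of q] by linarith
    qed
    also have "\<dots> \<le> e"
      using P \<open>\<delta> > 0\<close> \<open>0 < e\<close> \<open>0 < P\<close> by (simp add: field_simps)
    finally show ?thesis .
  qed
  show ?thesis
    unfolding eventually_at_top_linorder using bound by blast
qed

lemma eventually_Fcal_term_le_uniform:
  fixes K :: "(real^'n) set"
  assumes "compact K" "\<And>x q. x \<in> K \<Longrightarrow> 1 \<le> q \<Longrightarrow> \<exists>v. real q * x $ v \<notin> \<int>" "0 < e"
  shows "eventually (\<lambda>P. \<forall>x\<in>K. \<forall>q\<ge>1. \<forall>a. Fcal_term x P q a \<le> e) at_top"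
proof -
  define Q where "Q = nat \<lceil>inverse e\<rceil>"
  have "eventually (\<lambda>P. \<forall>x\<in>K. \<forall>a. Fcal_term x P q a \<le> e) at_top" if "1 \<le> q" for q
    using assms(1) assms(2)[OF _ that] that assms(3) by (rule eventually_Fcal_term_le)
  then have small_q: "eventually (\<lambda>P. \<forall>q\<in>{1..Q}. \<forall>x\<in>K. \<forall>a. Fcal_term x P q a \<le> e) at_top"
    by (intro eventually_ball_finite) auto
  have large_q: "Fcal_term x P q a \<le> e" if "0 \<le> P" "Q < q" for x P q a
  proof -
    have "inverse e < real q"
      using \<open>Q < q\<close> unfolding Q_def by linarith
    then have "inverse (real q) < e"
      using less_imp_inverse_less[of "inverse e" "real q"] \<open>0 < e\<close> by simp
    moreover have "Fcal_term x P q a \<le> inverse (real q)"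
      using \<open>0 \<le> P\<close> \<open>Q < q\<close> by (intro Fcal_term_le_inverse) auto
    ultimately show ?thesis
      by linarith
  qed
  show ?thesis
    using eventually_conj[OF small_q eventually_ge_at_top[of 0]]
  proof eventually_elim
    case (elim P)
    show ?case
    proof (intro ballI allI impI)
      fix x and q :: nat and a
      assume "x \<in> K" "1 \<le> q"
      show "Fcal_term x P q a \<le> e"
      proof (cases "q \<le> Q")
        case True
        then show ?thesis
          using elim \<open>x \<in> K\<close> \<open>1 \<le> q\<close> by auto
      next
        case False
        then show ?thesis
          using elim by (intro large_q) auto
      qed
    qed
  qed
qed

lemma Fcal_bounds:
  assumes "0 \<le> P" "\<And>q a. 1 \<le> q \<Longrightarrow> Fcal_term (LamMat L *v \<alpha>) P q a \<le> e"
  shows "0 \<le> Fcal L \<alpha> P \<and> Fcal L \<alpha> P \<le> e"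
proof -
  let ?S = "{Fcal_term (LamMat L *v \<alpha>) P q a | q a. q \<ge> 1}"
  have first: "Fcal_term (LamMat L *v \<alpha>) P 1 0 \<in> ?S"
    unfolding mem_Collect_eq by (intro exI[of _ "1::nat"] exI[of _ "0::int^'n"]) simp
  have bounded: "s \<le> e" if "s \<in> ?S" for s
    using that assms(2) by auto
  then have "bdd_above ?S"
    by (rule bdd_aboveI)
  then have "0 \<le> Sup ?S"
    using cSup_upper[OF first] Fcal_term_nonneg[OF assms(1), of "LamMat L *v \<alpha>" 1 0] by linarith
  moreover have "Sup ?S \<le> e"
    using first bounded by (intro cSup_least) auto
  ultimately show ?thesis
    by (simp add: Fcal_eq_Sup_Fcal_term)
qed

lemma eventually_Fcal_bounds:
  fixes K :: "(real^'n) set"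
  assumes "compact K" "\<And>x q. x \<in> K \<Longrightarrow> 1 \<le> q \<Longrightarrow> \<exists>v. real q * x $ v \<notin> \<int>"
    and "\<And>\<alpha>. \<alpha> \<in> A \<Longrightarrow> LamMat L *v \<alpha> \<in> K" and "0 < e"
  shows "eventually (\<lambda>P. \<forall>\<alpha>\<in>A. 0 \<le> Fcal L \<alpha> P \<and> Fcal L \<alpha> P \<le> e) at_top"
  using eventually_Fcal_term_le_uniform[OF assms(1,2,4)] eventually_ge_at_top
proof (rule eventually_conj[THEN eventually_mono])
  fix P
  assume P: "(\<forall>x\<in>K. \<forall>q\<ge>1. \<forall>a. Fcal_term x P q a \<le> e) \<and> 0 \<le> P"
  show "\<forall>\<alpha>\<in>A. 0 \<le> Fcal L \<alpha> P \<and> Fcal L \<alpha> P \<le> e"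
  proof
    fix \<alpha>
    assume "\<alpha> \<in> A"
    then have "LamMat L *v \<alpha> \<in> K"
      by (rule assms(3))
    then show "0 \<le> Fcal L \<alpha> P \<and> Fcal L \<alpha> P \<le> e"
      using P by (intro Fcal_bounds) auto
  qed
qed

theorem mainTheorem7:
  fixes L :: "real^'n^'r" and V W :: real
  assumes irr: "\<And>\<alpha>::real^'r. \<alpha> \<noteq> 0 \<Longrightarrow> \<exists>j. (\<Sum>i\<in>UNIV. \<alpha> $ i * L $ i $ j) \<notin> \<rat>"
    and V: "0 < V" and VW: "V \<le> W"
  shows "((\<lambda>P. SUP \<alpha>\<in>{\<alpha>. V \<le> supnorm (LamMat L *v \<alpha>) \<and> supnorm (LamMat L *v \<alpha>) \<le> W}. Fcal L \<alpha> P)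
           \<longlongrightarrow> 0) at_top"
proof (rule tendsto_zero_SUP_uniformI)
  define K where "K = range ((*v) (LamMat L)) \<inter> {x. V \<le> supnorm x \<and> supnorm x \<le> W}"
  have "compact K"
    unfolding K_def
    by (intro compact_Int_supnorm_shell closed_subspace subspace_UNIV
        linear_subspace_image matrix_vector_mul_linear)
  moreover have "\<exists>v. real q * x $ v \<notin> \<int>" if "x \<in> K" "1 \<le> q" for x q
    using that V by (intro LamMat_image_notin_Ints) (auto simp: K_def irr)
  moreover have "LamMat L *v \<alpha> \<in> K"
    if "\<alpha> \<in> {\<alpha>. V \<le> supnorm (LamMat L *v \<alpha>) \<and> supnorm (LamMat L *v \<alpha>) \<le> W}" for \<alpha>
    using that by (simp add: K_def)
  ultimately show "eventually (\<lambda>P. \<forall>\<alpha>\<in>{\<alpha>. V \<le> supnorm (LamMat L *v \<alpha>) \<and> supnorm (LamMat L *v \<alpha>) \<le> W}.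
      0 \<le> Fcal L \<alpha> P \<and> Fcal L \<alpha> P \<le> e) at_top" if "0 < e" for e
    using that by (rule eventually_Fcal_bounds)
  have "\<exists>\<alpha>. supnorm (LamMat L *v \<alpha>) = V"
    using V by (intro exists_supnorm_LamMat_eq irr) auto
  then show "{\<alpha>. V \<le> supnorm (LamMat L *v \<alpha>) \<and> supnorm (LamMat L *v \<alpha>) \<le> W} \<noteq> {}"
    using VW by auto
qed

end
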